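(* For the system (depending on the parameter $\alpha$) $$(u_{0,0}-u_{1,1})(v_{1,0}-v_{0,1})-\alpha+\beta=0,\qquad (v_{0,0}-v_{1,1})(u_{1,0}-u_{0,1})-\alpha+\beta=0,$$ the following is an extended symmetry: $$\frac{\partial u_{0,0}}{\partial \tau}=\frac{n}{v_{1,0}-v_{-1,0}},\qquad \frac{\partial v_{0,0}}{\partial \tau}=\frac{n}{u_{1,0}-u_{-1,0}},\qquad \frac{\partial\alpha}{\partial\tau}=-1.$$
   Context: Unknowns $u,v$ on $\mathbb Z^2$, $u_{i,j}=u(n+i,m+j)$, similarly $v$; $\alpha\neq\beta$ constants. Shifts $\mathcal S:n\mapsto n+1$, $\mathcal T:m\mapsto m+1$. For a system $\boldsymbol Q(\boldsymbol u_{0,0},\boldsymbol u_{1,0},\boldsymbol u_{0,1},\boldsymbol u_{1,1};\alpha)=\boldsymbol 0$ with $\boldsymbol u=(u,v)$ and Jacobians $\mathrm Q_{(p,q)}=\partial\boldsymbol Q/\partial\boldsymbol u_{p,q}$, a pair $(\boldsymbol M(n,m,[\boldsymbol u]),\xi)$ is an extended symmetry, written $\partial_\tau\boldsymbol u_{0,0}=\boldsymbol M$, $\partial_\tau\alpha=\xi$, if $\mathrm Q_{(0,0)}\boldsymbol M+\mathrm Q_{(1,0)}\mathcal S(\boldsymbol M)+\mathrm Q_{(0,1)}\mathcal T(\boldsymbol M)+\mathrm Q_{(1,1)}\mathcal S\mathcal T(\boldsymbol M)+\xi\,\partial_\alpha\boldsymbol Q=\boldsymbol 0$ holds on all solutions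 of the system. *)

theory Defs
  imports "HOL-Analysis.Analysis"
begin

type_synonym field2 = "int \<Rightarrow> int \<Rightarrow> real \<times> real"
  (* w n m = (u(n,m), v(n,m)) *)

type_synonym qargs = "(real \<times> real) \<times> (real \<times> real) \<times> (real \<times> real) \<times> (real \<times> real) \<times> real"
  (* (u_{0,0}, u_{1,0}, u_{0,1}, u_{1,1}, alpha), each u_{p,q} = (u,v) *)

text \<open>The linearisation Q_(0,0) M + Q_(1,0) S M + Q_(0,1) T M + Q_(1,1) ST M + xi dQ/dalpha
  is the Frechet derivative of Q applied to the direction (M, SM, TM, STM, xi).\<close>
definition extended_symmetry_on ::
  "(real \<Rightarrow> field2 \<Rightarrow> bool) \<Rightarrow> (qargs \<Rightarrow> real \<times> real)
   \<Rightarrow> (int \<Rightarrow> int \<Rightarrow> field2 \<Rightarrow> real \<times> real) \<Rightarrow> real \<Rightarrow> bool" where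
  "extended_symmetry_on adm Q M \<xi> \<longleftrightarrow>
     (\<forall>\<alpha> w. adm \<alpha> w \<and>
        (\<forall>n m. Q (w n m, w (n+1) m, w n (m+1), w (n+1) (m+1), \<alpha>) = 0) \<longrightarrow>
        (\<forall>n m. \<exists>Q'. (Q has_derivative Q') (at (w n m, w (n+1) m, w n (m+1), w (n+1) (m+1), \<alpha>))
              \<and> Q' (M n m w, M (n+1) m w, M n (m+1) w, M (n+1) (m+1) w, \<xi>) = 0))"

definition sys_Q :: "real \<Rightarrow> qargs \<Rightarrow> real \<times> real" where
  "sys_Q \<beta> = (\<lambda>((u00, v00), (u10, v10), (u01, v01), (u11, v11), \<alpha>).
      ((u00 - u11) * (v10 - v01) - \<alpha> + \<beta>, (v00 - v11) * (u10 - u01) - \<alpha> + \<beta>))"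

definition sym_M :: "int \<Rightarrow> int \<Rightarrow> field2 \<Rightarrow> real \<times> real" where
  "sym_M n m w =
     (of_int n / (snd (w (n+1) m) - snd (w (n-1) m)),
      of_int n / (fst (w (n+1) m) - fst (w (n-1) m)))"

end

theory Submission
  imports Defs
begin

text \<open>On admissible solutions both equations say that the quad products equal the nonzero
  constant \<open>c = \<alpha> - \<beta>\<close>, and two factorisations \<open>x y = x' y' = c\<close> of the same constant satisfy
  \<open>y/(y - y') - x/(x' - x) = 1\<close>. Applied to the quad at \<open>(n,m)\<close> and its neighbours at
  \<open>(n-1,m)\<close> and \<open>(n+1,m)\<close>, this turns the linearised first equation into \<open>n\<close> times one such
  ratio minus \<open>n+1\<close> times the other, i.e. \<open>-1\<close>, which is cancelled by \<open>\<alpha>\<^sub>\<tau> = -1\<close>.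
  The second equation is the first with \<open>u\<close> and \<open>v\<close> exchanged.\<close>

lemma hyperbola_difference_ratio:
  fixes x y x' y' :: real
  assumes "x * y = x' * y'" and "x * y \<noteq> 0" and "y \<noteq> y'"
  shows "y / (y - y') - x / (x' - x) = 1"
proof -
  have "x' \<noteq> x" using assms by auto
  with assms(3) have "y / (y - y') - x / (x' - x)
      = (y * (x' - x) - x * (y - y')) / ((y - y') * (x' - x))"
    by (simp add: diff_frac_eq)
  also have "y * (x' - x) - x * (y - y') = (y - y') * (x' - x)"
    using assms(1) by (simp add: algebra_simps)
  finally show ?thesis using \<open>x' \<noteq> x\<close> assms(3) by simp
qed

lemma quad_lattice_linearisation_vanishes:
  fixes u v :: "int \<Rightarrow> int \<Rightarrow> real" and c :: real and n m :: int
  assumes quad_u: "\<And>i j. (u i j - u (i+1) (j+1)) * (v (i+1) j - v i (j+1)) = c"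
    and quad_v: "\<And>i j. (v i j - v (i+1) (j+1)) * (u (i+1) j - u i (j+1)) = c"
    and "c \<noteq> 0"
    and dv: "\<And>i j. v (i+1) j \<noteq> v (i-1) j"
  shows "(of_int n / (v (n+1) m - v (n-1) m) - (of_int n + 1) / (v (n+2) (m+1) - v n (m+1)))
           * (v (n+1) m - v n (m+1))
         + (u n m - u (n+1) (m+1))
           * ((of_int n + 1) / (u (n+2) m - u n m) - of_int n / (u (n+1) (m+1) - u (n-1) (m+1)))
         + 1 = 0"
proof -
  define X where "X = u n m - u (n+1) (m+1)"
  define Y where "Y = v (n+1) m - v n (m+1)"
  have XY: "X * Y = c" using quad_u[of n m] by (simp add: X_def Y_def)
  have XY_nonzero: "X * Y \<noteq> 0" using XY \<open>c \<noteq> 0\<close> by simp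
  have left: "Y / (v (n+1) m - v (n-1) m) - X / (u (n+1) (m+1) - u (n-1) (m+1)) = 1"
  proof -
    have "X * Y = (u n m - u (n-1) (m+1)) * (v (n-1) m - v n (m+1))"
      using XY quad_v[of "n-1" m] by (simp add: mult.commute)
    moreover have "Y \<noteq> v (n-1) m - v n (m+1)" using dv[of n m] by (simp add: Y_def)
    ultimately have "Y / (Y - (v (n-1) m - v n (m+1))) - X / ((u n m - u (n-1) (m+1)) - X) = 1"
      by (rule hyperbola_difference_ratio[OF _ XY_nonzero])
    then show ?thesis by (simp add: X_def Y_def)
  qed
  have right: "Y / (v (n+2) (m+1) - v n (m+1)) - X / (u (n+2) m - u n m) = 1"
  proof -
    have "X * Y = (u (n+2) m - u (n+1) (m+1)) * (v (n+1) m - v (n+2) (m+1))"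
      using XY quad_v[of "n+1" m] by (simp add: mult.commute add.assoc)
    moreover have "Y \<noteq> v (n+1) m - v (n+2) (m+1)"
      using dv[of "n+1" "m+1"] by (simp add: Y_def add.assoc)
    ultimately have "Y / (Y - (v (n+1) m - v (n+2) (m+1))) - X / ((u (n+2) m - u (n+1) (m+1)) - X) = 1"
      by (rule hyperbola_difference_ratio[OF _ XY_nonzero])
    then show ?thesis by (simp add: X_def Y_def)
  qed
  have "(of_int n / (v (n+1) m - v (n-1) m) - (of_int n + 1) / (v (n+2) (m+1) - v n (m+1))) * Y
        + X * ((of_int n + 1) / (u (n+2) m - u n m) - of_int n / (u (n+1) (m+1) - u (n-1) (m+1)))
      = of_int n * (Y / (v (n+1) m - v (n-1) m) - X / (u (n+1) (m+1) - u (n-1) (m+1)))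
        - (of_int n + 1) * (Y / (v (n+2) (m+1) - v n (m+1)) - X / (u (n+2) m - u n m))"
    by (simp add: algebra_simps)
  also have "\<dots> = -1" unfolding left right by simp
  finally show ?thesis by (simp add: X_def Y_def)
qed

lemma sys_Q_has_derivative:
  "(sys_Q \<beta> has_derivative
     (\<lambda>((du00, dv00), (du10, dv10), (du01, dv01), (du11, dv11), d\<alpha>).
        ((du00 - du11) * (v10 - v01) + (u00 - u11) * (dv10 - dv01) - d\<alpha>,
         (dv00 - dv11) * (u10 - u01) + (v00 - v11) * (du10 - du01) - d\<alpha>)))
     (at ((u00, v00), (u10, v10), (u01, v01), (u11, v11), \<alpha>))"
proof -
  have projections: "sys_Q \<beta> = (\<lambda>x.
      ((fst (fst x) - fst (fst (snd (snd (snd x))))) * (snd (fst (snd x)) - snd (fst (snd (snd x))))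
         - snd (snd (snd (snd x))) + \<beta>,
       (snd (fst x) - snd (fst (snd (snd (snd x))))) * (fst (fst (snd x)) - fst (fst (snd (snd x))))
         - snd (snd (snd (snd x))) + \<beta>))"
    by (auto simp: sys_Q_def fun_eq_iff split: prod.splits)
  show ?thesis unfolding projections
    by (rule derivative_eq_intros refl | simp)+
       (auto simp: fun_eq_iff algebra_simps split: prod.splits)
qed

theorem mainTheorem4:
  fixes \<beta> :: real
  shows "extended_symmetry_on
           (\<lambda>\<alpha> w. \<alpha> \<noteq> \<beta> \<and>
              (\<forall>n m. fst (w (n+1) m) \<noteq> fst (w (n-1) m) \<and> snd (w (n+1) m) \<noteq> snd (w (n-1) m)))
           (sys_Q \<beta>) sym_M (-1)"
  unfolding extended_symmetry_on_def
proof (intro allI impI)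
  fix \<alpha> :: real and w :: field2 and n m :: int
  define u where "u i j = fst (w i j)" for i j
  define v where "v i j = snd (w i j)" for i j
  have w_uv: "w i j = (u i j, v i j)" for i j by (simp add: u_def v_def)
  assume "(\<alpha> \<noteq> \<beta> \<and> (\<forall>n m. fst (w (n+1) m) \<noteq> fst (w (n-1) m) \<and> snd (w (n+1) m) \<noteq> snd (w (n-1) m)))
      \<and> (\<forall>n m. sys_Q \<beta> (w n m, w (n+1) m, w n (m+1), w (n+1) (m+1), \<alpha>) = 0)"
  then have "\<alpha> - \<beta> \<noteq> 0"
    and du: "\<And>i j. u (i+1) j \<noteq> u (i-1) j" and dv: "\<And>i j. v (i+1) j \<noteq> v (i-1) j"
    and solution: "\<And>i j. sys_Q \<beta> ((u i j, v i j), (u (i+1) j, v (i+1) j), (u i (j+1), v i (j+1)),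
                            (u (i+1) (j+1), v (i+1) (j+1)), \<alpha>) = 0"
    by (auto simp: u_def v_def)
  have quad_u: "(u i j - u (i+1) (j+1)) * (v (i+1) j - v i (j+1)) = \<alpha> - \<beta>"
    and quad_v: "(v i j - v (i+1) (j+1)) * (u (i+1) j - u i (j+1)) = \<alpha> - \<beta>" for i j
    using solution[of i j] by (simp_all add: sys_Q_def prod_eq_iff algebra_simps)
  note linearisation_u = quad_lattice_linearisation_vanishes[of u v, OF quad_u quad_v \<open>\<alpha> - \<beta> \<noteq> 0\<close> dv]
  note linearisation_v = quad_lattice_linearisation_vanishes[of v u, OF quad_v quad_u \<open>\<alpha> - \<beta> \<noteq> 0\<close> du]
  show "\<exists>Q'. (sys_Q \<beta> has_derivative Q') (at (w n m, w (n+1) m, w n (m+1), w (n+1) (m+1), \<alpha>))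
          \<and> Q' (sym_M n m w, sym_M (n+1) m w, sym_M n (m+1) w, sym_M (n+1) (m+1) w, -1) = 0"
    unfolding w_uv sym_M_def fst_conv snd_conv
    by (intro exI conjI, rule sys_Q_has_derivative)
       (use linearisation_u[of n m] linearisation_v[of n m] in \<open>simp add: add.assoc zero_prod_def\<close>)
qed

end
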